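(* Let $\mathcal{T}=(\mathcal{V},\mathcal{E})$ be a grid of depth $d$ obeying the LC-PF model and covariance assumption of the context, with zero-mean Gaussian injection deviations. Let $r_{\max},x_{\max}$ be the maximum line resistance and reactance, and set $k_2=\max(r_{\max}^2,x_{\max}^2)\max_{c}\big(\Omega_p(c,c)+\Omega_q(c,c)+2\Omega_{pq}(c,c)\big)$, the inner maximum being over non-root nodes $c$. Then every diagonal entry of the voltage magnitude covariance matrix satisfies $\Omega_v(a,a)\le d^2|\mathcal{V}|k_2$.
   Context: $\mathcal{T}=(\mathcal{V},\mathcal{E})$ is a tree with a distinguished root (substation) of degree one. Its depth $d$ is the maximum number of edges on a path from the root. Each edge $(ab)$ has resistance $r_{ab}>0$ and reactance $x_{ab}>0$. Let $H_{1/r},H_{1/x}$ be the weighted Laplacians with edge weights $1/r_{ab}$, $1/x_{ab}$, with the root row and column removed. Non-root nodes have random injections $p_a,q_a$. The LC-PF model gives the voltage magnitude deviations $v=H_{1/r}^{-1}p+H_{1/x}^{-1}q$ at non-root nodes, and $\Omega_v$ is the covariance matrix of $v$. Covariance assumption: $\Omega_p,\Omega_q$ are the covariances of $p,q$, and $\Omega_{pq}=\mathbb{E}[(p-\mathbb{E}p)(q-\mathbb{E}q)^T]=\Omega_{qp}^T$. For distinct non-root $a,b$, $\Omega_p(a,b)=\Omega_q(a,b)=\Omega_{qp}(a,b)=0$, and $\Omega_{qp}(a,a)\ge0$. *)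

theory Defs
  imports "HOL-Probability.Probability"
begin

text \<open>Vertex type: 'n option, root = None, non-root nodes = Some n.
  The tree is given by a parent map par :: 'n => 'n option; the edges are
  the pairs (Some n, par n), each edge identified by its child n.\<close>

definition step_up :: "('n \<Rightarrow> 'n option) \<Rightarrow> 'n option \<Rightarrow> 'n option" where
  "step_up par u = (case u of None \<Rightarrow> None | Some n \<Rightarrow> par n)"

definition is_rooted_tree :: "('n \<Rightarrow> 'n option) \<Rightarrow> bool" where
  "is_rooted_tree par \<longleftrightarrow> (\<forall>n. \<exists>k. (step_up par ^^ k) (Some n) = None)"

definition root_degree_one :: "('n \<Rightarrow> 'n option) \<Rightarrow> bool" where
  "root_degree_one par \<longleftrightarrow> card {n. par n = None} = 1"

definition node_depth :: "('n \<Rightarrow> 'n option) \<Rightarrow> 'n \<Rightarrow> nat" where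
  "node_depth par n = (LEAST k. (step_up par ^^ k) (Some n) = None)"

definition tree_depth :: "('n::finite \<Rightarrow> 'n option) \<Rightarrow> nat" where
  "tree_depth par = Max (range (node_depth par))"

definition ind :: "'v \<Rightarrow> 'v \<Rightarrow> real" where
  "ind u w = (if u = w then 1 else 0)"

definition laplacian :: "('n::finite \<Rightarrow> 'n option) \<Rightarrow> ('n \<Rightarrow> real) \<Rightarrow> 'n option \<Rightarrow> 'n option \<Rightarrow> real" where
  "laplacian par w u u' =
     (\<Sum>n\<in>UNIV. w n * (ind u (Some n) - ind u (par n)) * (ind u' (Some n) - ind u' (par n)))"

definition red_laplacian :: "('n::finite \<Rightarrow> 'n option) \<Rightarrow> ('n \<Rightarrow> real) \<Rightarrow> real^'n^'n" where
  "red_laplacian par w = (\<chi> i j. laplacian par w (Some i) (Some j))"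

definition cov :: "'w measure \<Rightarrow> ('w \<Rightarrow> real) \<Rightarrow> ('w \<Rightarrow> real) \<Rightarrow> real" where
  "cov M X Y = (\<integral>\<omega>. (X \<omega> - (\<integral>\<omega>'. X \<omega>' \<partial>M)) * (Y \<omega> - (\<integral>\<omega>'. Y \<omega>' \<partial>M)) \<partial>M)"

definition centered_gaussian :: "'w measure \<Rightarrow> ('w \<Rightarrow> real) \<Rightarrow> bool" where
  "centered_gaussian M X \<longleftrightarrow>
     X \<in> borel_measurable M \<and>
     ((AE \<omega> in M. X \<omega> = 0) \<or> (\<exists>\<sigma>>0. distributed M lborel X (normal_density 0 \<sigma>)))"

definition jointly_centered_gaussian ::
    "'w measure \<Rightarrow> ('n::finite \<Rightarrow> 'w \<Rightarrow> real) \<Rightarrow> ('n \<Rightarrow> 'w \<Rightarrow> real) \<Rightarrow> bool" where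
  "jointly_centered_gaussian M p q \<longleftrightarrow>
     (\<forall>\<alpha> \<beta>. centered_gaussian M (\<lambda>\<omega>. \<Sum>c\<in>UNIV. \<alpha> c * p c \<omega> + \<beta> c * q c \<omega>))"

definition lcpf_v :: "('n::finite \<Rightarrow> 'n option) \<Rightarrow> ('n \<Rightarrow> real) \<Rightarrow> ('n \<Rightarrow> real)
     \<Rightarrow> ('n \<Rightarrow> 'w \<Rightarrow> real) \<Rightarrow> ('n \<Rightarrow> 'w \<Rightarrow> real) \<Rightarrow> 'n \<Rightarrow> 'w \<Rightarrow> real" where
  "lcpf_v par r x p q a \<omega> =
     (matrix_inv (red_laplacian par (\<lambda>n. 1 / r n)) *v (\<chi> c. p c \<omega>)) $ a
   + (matrix_inv (red_laplacian par (\<lambda>n. 1 / x n)) *v (\<chi> c. q c \<omega>)) $ a"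

end

(* With A the edge-node incidence matrix and W = diag(w), the reduced Laplacian is
   H = A^T W A.  On a tree A is inverted by the path matrix B (B(a,n) = 1 iff edge n lies on
   the path from a to the root), so H^{-1}(a,c) is the total weight 1/w of the edges common to
   the root paths of a and c; for w = 1/r this lies in [0, d r_max].  Since injections at
   distinct nodes are uncorrelated, Var v_a = sum_c (R_c^2 Var p_c + X_c^2 Var q_c
   + 2 R_c X_c Cov(p_c, q_c)); as all three covariances are nonnegative, each summand is at
   most d^2 max(r_max^2, x_max^2) (Var p_c + Var q_c + 2 Cov(p_c, q_c)). *)

theory Submission
  imports Defs
begin

definition path_to_root :: "('n \<Rightarrow> 'n option) \<Rightarrow> 'n \<Rightarrow> 'n set" where
  "path_to_root par i = {n. \<exists>k. (step_up par ^^ k) (Some i) = Some n}"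

lemma step_up_funpow_None [simp]: "(step_up par ^^ k) None = None"
  by (induction k) (auto simp: step_up_def)

lemma step_up_funpow_Suc_Some: "(step_up par ^^ Suc k) (Some n) = (step_up par ^^ k) (par n)"
  by (simp add: funpow_Suc_right step_up_def del: funpow.simps)

lemma step_up_funpow_node_depth:
  "is_rooted_tree par \<Longrightarrow> (step_up par ^^ node_depth par n) (Some n) = None"
  unfolding node_depth_def is_rooted_tree_def by (rule LeastI_ex) blast

lemma step_up_funpow_beyond_node_depth:
  assumes "is_rooted_tree par" "node_depth par n \<le> k"
  shows "(step_up par ^^ k) (Some n) = None"
proof -
  obtain j where "k = j + node_depth par n"
    using assms(2) by (metis le_add_diff_inverse2)
  then show ?thesis
    using step_up_funpow_node_depth[OF assms(1)] by (simp add: funpow_add)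
qed

lemma path_to_root_eq:
  "path_to_root par n = insert n {m. \<exists>k. (step_up par ^^ k) (par n) = Some m}"
proof -
  have "(\<exists>k. (step_up par ^^ k) (Some n) = Some m) \<longleftrightarrow>
        m = n \<or> (\<exists>k. (step_up par ^^ Suc k) (Some n) = Some m)" for m
    by (metis funpow_0 not0_implies_Suc option.inject)
  then show ?thesis
    by (auto simp: path_to_root_def step_up_funpow_Suc_Some simp del: funpow.simps)
qed

lemma path_to_root_root_child: "par n = None \<Longrightarrow> path_to_root par n = {n}"
  by (simp add: path_to_root_eq)

lemma path_to_root_parent: "par n = Some j \<Longrightarrow> path_to_root par n = insert n (path_to_root par j)"
  unfolding path_to_root_eq[of par n] by (simp add: path_to_root_def)

lemma not_in_path_to_root_parent:
  assumes tree: "is_rooted_tree par" and parent: "par n = Some j"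
  shows "n \<notin> path_to_root par j"
proof
  assume "n \<in> path_to_root par j"
  then obtain k where "(step_up par ^^ k) (Some j) = Some n"
    by (auto simp: path_to_root_def)
  then have cycle: "(step_up par ^^ Suc k) (Some n) = Some n"
    using parent by (simp add: step_up_funpow_Suc_Some del: funpow.simps)
  have "(step_up par ^^ (Suc k * m)) (Some n) = Some n" for m
  proof (induction m)
    case (Suc m)
    have "Suc k * Suc m = Suc k + Suc k * m"
      by simp
    then show ?case
      using Suc cycle by (simp only: funpow_add o_apply)
  qed simp
  moreover have "(step_up par ^^ (Suc k * node_depth par n)) (Some n) = None"
    by (rule step_up_funpow_beyond_node_depth[OF tree]) simp
  ultimately show False
    by simp
qed

lemma card_path_to_root_le_node_depth:
  assumes "is_rooted_tree par"
  shows "card (path_to_root par n) \<le> node_depth par n"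
proof -
  let ?node = "\<lambda>k. the ((step_up par ^^ k) (Some n))"
  have "path_to_root par n \<subseteq> ?node ` {..<node_depth par n}"
  proof
    fix m
    assume "m \<in> path_to_root par n"
    then obtain k where k: "(step_up par ^^ k) (Some n) = Some m"
      by (auto simp: path_to_root_def)
    then have "k < node_depth par n"
      using step_up_funpow_beyond_node_depth[OF assms, of n k] by (metis not_le option.distinct(1))
    with k show "m \<in> ?node ` {..<node_depth par n}"
      by (auto intro!: image_eqI[of _ _ k])
  qed
  then show ?thesis
    by (metis card_image_le card_lessThan card_mono finite_imageI finite_lessThan order_trans)
qed

lemma node_depth_le_tree_depth: "node_depth par n \<le> tree_depth par"
  unfolding tree_depth_def by (rule Max_ge) auto

lemma sum_common_path_le_tree_depth:
  fixes r :: "'n::finite \<Rightarrow> real"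
  assumes tree: "is_rooted_tree par" and r: "\<And>n. 0 \<le> r n"
  shows "(\<Sum>n\<in>path_to_root par a \<inter> path_to_root par c. r n) \<le> real (tree_depth par) * Max (range r)"
proof -
  let ?S = "path_to_root par a \<inter> path_to_root par c"
  have r_le_Max: "r n \<le> Max (range r)" for n
    by (rule Max_ge) auto
  have "card ?S \<le> card (path_to_root par a)"
    by (rule card_mono) auto
  also have "\<dots> \<le> node_depth par a"
    by (rule card_path_to_root_le_node_depth[OF tree])
  also have "\<dots> \<le> tree_depth par"
    by (rule node_depth_le_tree_depth)
  finally have card_S: "card ?S \<le> tree_depth par" .
  have "(\<Sum>n\<in>?S. r n) \<le> real (card ?S) * Max (range r)"
    using sum_bounded_above[of ?S r "Max (range r)"] r_le_Max by simp
  also have "\<dots> \<le> real (tree_depth par) * Max (range r)"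
    using card_S order_trans[OF r r_le_Max] by (intro mult_right_mono) simp_all
  finally show ?thesis .
qed

definition diag_matrix :: "('n::finite \<Rightarrow> 'a::semiring_1) \<Rightarrow> 'a^'n^'n" where
  "diag_matrix d = (\<chi> i j. if i = j then d i else 0)"

lemma matrix_mult_diag_matrix: "A ** diag_matrix d = (\<chi> i j. A $ i $ j * d j)"
  by (simp add: vec_eq_iff matrix_matrix_mult_def diag_matrix_def
      if_distrib[where f = "times x" for x] cong: if_cong)

lemma diag_matrix_mult_diag_matrix: "diag_matrix d ** diag_matrix e = diag_matrix (\<lambda>i. d i * e i)"
  unfolding matrix_mult_diag_matrix by (simp add: vec_eq_iff diag_matrix_def)

lemma diag_matrix_1: "diag_matrix (\<lambda>_. 1) = mat 1"
  by (simp add: diag_matrix_def mat_def)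

lemma matrix_inv_eq_right_inverse:
  fixes A B :: "'a::field^'n^'n"
  assumes AB: "A ** B = mat 1"
  shows "matrix_inv A = B"
proof -
  have BA: "B ** A = mat 1"
    using AB matrix_left_right_inverse by blast
  have "A ** matrix_inv A = mat 1 \<and> matrix_inv A ** A = mat 1"
    unfolding matrix_inv_def by (rule someI[of _ B]) (use AB BA in blast)
  then have "matrix_inv A = matrix_inv A ** (A ** B)"
    using AB by simp
  also have "\<dots> = B"
    using \<open>A ** matrix_inv A = mat 1 \<and> matrix_inv A ** A = mat 1\<close> by (simp add: matrix_mul_assoc)
  finally show ?thesis .
qed

text \<open>Rows are indexed by edges (an edge is named by its child), columns by non-root nodes.\<close>
definition incidence_matrix :: "('n::finite \<Rightarrow> 'n option) \<Rightarrow> real^'n^'n" where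
  "incidence_matrix par = (\<chi> n i. ind (Some i) (Some n) - ind (Some i) (par n))"

definition path_matrix :: "('n::finite \<Rightarrow> 'n option) \<Rightarrow> real^'n^'n" where
  "path_matrix par = (\<chi> i n. if n \<in> path_to_root par i then 1 else 0)"

lemma red_laplacian_eq_incidence:
  "red_laplacian par w =
     transpose (incidence_matrix par) ** diag_matrix w ** incidence_matrix par"
  unfolding matrix_mult_diag_matrix
  by (simp add: vec_eq_iff red_laplacian_def laplacian_def matrix_matrix_mult_def
      transpose_def incidence_matrix_def mult_ac)

lemma incidence_mult_path_matrix:
  assumes tree: "is_rooted_tree par"
  shows "incidence_matrix par ** path_matrix par = mat 1"
proof -
  let ?B = "path_matrix par"
  have delta: "(\<Sum>i\<in>UNIV. ind (Some i) u * ?B $ i $ m) =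
                 (case u of None \<Rightarrow> 0 | Some j \<Rightarrow> ?B $ j $ m)" for u m
    by (cases u) (simp_all add: ind_def if_distrib[where f = "\<lambda>y. y * x" for x] cong: if_cong)
  have "(incidence_matrix par ** ?B) $ n $ m = mat 1 $ n $ m" for n m
  proof -
    have "(incidence_matrix par ** ?B) $ n $ m =
            ?B $ n $ m - (case par n of None \<Rightarrow> 0 | Some j \<Rightarrow> ?B $ j $ m)"
      by (simp add: matrix_matrix_mult_def incidence_matrix_def left_diff_distrib sum_subtractf delta)
    then show ?thesis
      using not_in_path_to_root_parent[OF tree, of n]
      by (cases "par n") (auto simp: delta mat_def path_matrix_def path_to_root_root_child path_to_root_parent)
  qed
  then show ?thesis
    by (simp add: vec_eq_iff)
qed

lemma path_diag_path_entry:
  "(path_matrix par ** diag_matrix d ** transpose (path_matrix par)) $ a $ c =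
     (\<Sum>n\<in>path_to_root par a \<inter> path_to_root par c. d n)"
proof -
  have "(path_matrix par ** diag_matrix d ** transpose (path_matrix par)) $ a $ c =
          (\<Sum>n\<in>UNIV. if n \<in> path_to_root par a \<inter> path_to_root par c then d n else 0)"
    unfolding matrix_mult_diag_matrix
    by (auto simp: matrix_matrix_mult_def transpose_def path_matrix_def intro: sum.cong)
  then show ?thesis
    using sum.inter_restrict[of UNIV d "path_to_root par a \<inter> path_to_root par c"] by simp
qed

lemma matrix_inv_red_laplacian:
  assumes tree: "is_rooted_tree par" and w: "\<And>n. w n \<noteq> 0"
  shows "matrix_inv (red_laplacian par w) =
           path_matrix par ** diag_matrix (\<lambda>n. 1 / w n) ** transpose (path_matrix par)"
proof (rule matrix_inv_eq_right_inverse)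
  let ?A = "incidence_matrix par" and ?B = "path_matrix par"
  have BA: "?B ** ?A = mat 1"
    using incidence_mult_path_matrix[OF tree] matrix_left_right_inverse by blast
  have "red_laplacian par w ** (?B ** diag_matrix (\<lambda>n. 1 / w n) ** transpose ?B) =
        transpose ?A ** (diag_matrix w ** (?A ** ?B) ** diag_matrix (\<lambda>n. 1 / w n)) ** transpose ?B"
    by (simp add: red_laplacian_eq_incidence matrix_mul_assoc)
  also have "\<dots> = transpose (?B ** ?A)"
    using w by (simp add: incidence_mult_path_matrix[OF tree] diag_matrix_mult_diag_matrix
        diag_matrix_1 matrix_transpose_mul)
  finally show "red_laplacian par w ** (?B ** diag_matrix (\<lambda>n. 1 / w n) ** transpose ?B) = mat 1"
    by (simp add: BA)
qed

lemma lcpf_v_eq_common_path_sums: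
  assumes tree: "is_rooted_tree par" and r: "\<And>n. r n > 0" and x: "\<And>n. x n > 0"
  shows "lcpf_v par r x p q a =
           (\<lambda>\<omega>. \<Sum>c\<in>UNIV. (\<Sum>n\<in>path_to_root par a \<inter> path_to_root par c. r n) * p c \<omega>
                           + (\<Sum>n\<in>path_to_root par a \<inter> path_to_root par c. x n) * q c \<omega>)"
proof -
  have "matrix_inv (red_laplacian par (\<lambda>n. 1 / r n)) =
      path_matrix par ** diag_matrix r ** transpose (path_matrix par)"
    using matrix_inv_red_laplacian[OF tree, of "\<lambda>n. 1 / r n"] r by (simp add: less_imp_neq[symmetric])
  moreover have "matrix_inv (red_laplacian par (\<lambda>n. 1 / x n)) =
      path_matrix par ** diag_matrix x ** transpose (path_matrix par)"
    using matrix_inv_red_laplacian[OF tree, of "\<lambda>n. 1 / x n"] x by (simp add: less_imp_neq[symmetric])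
  ultimately show ?thesis
    by (simp add: fun_eq_iff lcpf_v_def path_diag_path_entry matrix_vector_mult_def sum.distrib)
qed

definition square_integrable :: "'w measure \<Rightarrow> ('w \<Rightarrow> real) \<Rightarrow> bool" where
  "square_integrable M X \<longleftrightarrow> X \<in> borel_measurable M \<and> integrable M (\<lambda>\<omega>. (X \<omega>)\<^sup>2)"

lemma integrable_mult_square_integrable:
  assumes "square_integrable M X" "square_integrable M Y"
  shows "integrable M (\<lambda>\<omega>. X \<omega> * Y \<omega>)"
proof (rule Bochner_Integration.integrable_bound)
  show "integrable M (\<lambda>\<omega>. (X \<omega>)\<^sup>2 + (Y \<omega>)\<^sup>2)"
    using assms by (simp add: square_integrable_def)
  show "(\<lambda>\<omega>. X \<omega> * Y \<omega>) \<in> borel_measurable M"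
    using assms by (auto simp: square_integrable_def)
  have "\<bar>X \<omega> * Y \<omega>\<bar> \<le> (X \<omega>)\<^sup>2 + (Y \<omega>)\<^sup>2" for \<omega>
  proof -
    have "2 * \<bar>X \<omega> * Y \<omega>\<bar> \<le> (X \<omega>)\<^sup>2 + (Y \<omega>)\<^sup>2"
      using sum_squares_bound[of "\<bar>X \<omega>\<bar>" "\<bar>Y \<omega>\<bar>"] by (simp add: abs_mult)
    then show ?thesis
      using abs_ge_zero[of "X \<omega> * Y \<omega>"] by linarith
  qed
  then show "AE \<omega> in M. norm (X \<omega> * Y \<omega>) \<le> norm ((X \<omega>)\<^sup>2 + (Y \<omega>)\<^sup>2)"
    by simp
qed

lemma square_integrable_add:
  assumes "square_integrable M X" "square_integrable M Y"
  shows "square_integrable M (\<lambda>\<omega>. X \<omega> + Y \<omega>)"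
proof -
  have "(\<lambda>\<omega>. (X \<omega> + Y \<omega>)\<^sup>2) = (\<lambda>\<omega>. (X \<omega>)\<^sup>2 + 2 * (X \<omega> * Y \<omega>) + (Y \<omega>)\<^sup>2)"
    by (simp add: fun_eq_iff power2_sum)
  then show ?thesis
    using assms integrable_mult_square_integrable[OF assms] by (auto simp: square_integrable_def)
qed

lemma square_integrable_cmult:
  "square_integrable M X \<Longrightarrow> square_integrable M (\<lambda>\<omega>. c * X \<omega>)"
  by (auto simp: square_integrable_def power_mult_distrib)

lemma square_integrable_sum:
  "(\<And>i. i \<in> I \<Longrightarrow> square_integrable M (X i)) \<Longrightarrow> square_integrable M (\<lambda>\<omega>. \<Sum>i\<in>I. X i \<omega>)"
  by (induction I rule: infinite_finite_induct)
    (simp_all add: square_integrable_add, simp_all add: square_integrable_def)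

lemma cov_commute: "cov M X Y = cov M Y X"
  by (simp add: cov_def mult.commute)

lemma cov_cmult_left: "cov M (\<lambda>\<omega>. c * X \<omega>) Y = c * cov M X Y"
  by (simp add: cov_def right_diff_distrib[symmetric] mult.assoc)

lemma cov_cmult_right: "cov M X (\<lambda>\<omega>. c * Y \<omega>) = c * cov M X Y"
  by (simp add: cov_commute[of M X] cov_cmult_left)

lemma cov_self_nonneg: "0 \<le> cov M X X"
  unfolding cov_def by (rule integral_nonneg_AE) simp

lemma (in prob_space) cov_eq_expectation_mult:
  assumes X: "square_integrable M X" and Y: "square_integrable M Y"
  shows "cov M X Y = expectation (\<lambda>\<omega>. X \<omega> * Y \<omega>) - expectation X * expectation Y"
proof -
  have "integrable M X" "integrable M Y"
    using X Y square_integrable_imp_integrable by (auto simp: square_integrable_def)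
  moreover have "integrable M (\<lambda>\<omega>. X \<omega> * Y \<omega>)"
    using integrable_mult_square_integrable[OF X Y] .
  moreover have "(\<lambda>\<omega>. (X \<omega> - expectation X) * (Y \<omega> - expectation Y)) =
      (\<lambda>\<omega>. X \<omega> * Y \<omega> - expectation Y * X \<omega> - expectation X * Y \<omega> + expectation X * expectation Y)"
    by (simp add: fun_eq_iff algebra_simps)
  ultimately show ?thesis
    by (simp add: cov_def prob_space)
qed

lemma (in prob_space) cov_add_left:
  assumes "square_integrable M X" "square_integrable M Y" "square_integrable M Z"
  shows "cov M (\<lambda>\<omega>. X \<omega> + Y \<omega>) Z = cov M X Z + cov M Y Z"
proof -
  have "integrable M X" "integrable M Y" "integrable M (\<lambda>\<omega>. X \<omega> * Z \<omega>)" "integrable M (\<lambda>\<omega>. Y \<omega> * Z \<omega>)"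
    using assms square_integrable_imp_integrable integrable_mult_square_integrable
    by (auto simp: square_integrable_def)
  then show ?thesis
    using assms square_integrable_add[OF assms(1,2)]
    by (simp add: cov_eq_expectation_mult algebra_simps)
qed

lemma (in prob_space) cov_add_right:
  assumes "square_integrable M X" "square_integrable M Y" "square_integrable M Z"
  shows "cov M Z (\<lambda>\<omega>. X \<omega> + Y \<omega>) = cov M Z X + cov M Z Y"
  using cov_add_left[OF assms] by (simp add: cov_commute[of M Z])

lemma (in prob_space) cov_sum_left:
  assumes "\<And>i. i \<in> I \<Longrightarrow> square_integrable M (X i)" "square_integrable M Z"
  shows "cov M (\<lambda>\<omega>. \<Sum>i\<in>I. X i \<omega>) Z = (\<Sum>i\<in>I. cov M (X i) Z)"
  using assms(1)
proof (induction I rule: infinite_finite_induct)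
  case (insert i I)
  then show ?case
    by (simp add: cov_add_left square_integrable_sum assms(2))
qed (simp_all add: cov_def)

lemma (in prob_space) cov_lincomb2:
  assumes "square_integrable M X" "square_integrable M Y" "square_integrable M U" "square_integrable M V"
  shows "cov M (\<lambda>\<omega>. a * X \<omega> + b * Y \<omega>) (\<lambda>\<omega>. c * U \<omega> + d * V \<omega>) =
           a * c * cov M X U + a * d * cov M X V + b * c * cov M Y U + b * d * cov M Y V"
  using assms
  by (simp add: cov_add_left cov_add_right square_integrable_add square_integrable_cmult
      cov_cmult_left cov_cmult_right algebra_simps)

lemma (in prob_space) variance_sum_uncorrelated:
  assumes "finite I" and sq: "\<And>i. i \<in> I \<Longrightarrow> square_integrable M (X i)"
    and uncorrelated: "\<And>i j. i \<in> I \<Longrightarrow> j \<in> I \<Longrightarrow> i \<noteq> j \<Longrightarrow> cov M (X i) (X j) = 0"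
  shows "cov M (\<lambda>\<omega>. \<Sum>i\<in>I. X i \<omega>) (\<lambda>\<omega>. \<Sum>i\<in>I. X i \<omega>) = (\<Sum>i\<in>I. cov M (X i) (X i))"
proof -
  have "cov M (X i) (\<lambda>\<omega>. \<Sum>j\<in>I. X j \<omega>) = cov M (X i) (X i)" if "i \<in> I" for i
  proof -
    have "cov M (X i) (\<lambda>\<omega>. \<Sum>j\<in>I. X j \<omega>) = (\<Sum>j\<in>I. cov M (X j) (X i))"
      using cov_sum_left[OF sq sq[OF that]] by (simp add: cov_commute[of M "X i"])
    also have "\<dots> = (\<Sum>j\<in>I. if j = i then cov M (X i) (X i) else 0)"
      using uncorrelated that by (intro sum.cong) auto
    finally show ?thesis
      using \<open>finite I\<close> that by simp
  qed
  then show ?thesis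
    by (simp add: cov_sum_left sq square_integrable_sum)
qed

lemma (in prob_space) variance_nodal_injections:
  fixes p q :: "'n::finite \<Rightarrow> 'a \<Rightarrow> real"
  assumes sq_p: "\<And>c. square_integrable M (p c)" and sq_q: "\<And>c. square_integrable M (q c)"
    and cov_p: "\<And>a b. a \<noteq> b \<Longrightarrow> cov M (p a) (p b) = 0"
    and cov_q: "\<And>a b. a \<noteq> b \<Longrightarrow> cov M (q a) (q b) = 0"
    and cov_qp: "\<And>a b. a \<noteq> b \<Longrightarrow> cov M (q a) (p b) = 0"
  shows "cov M (\<lambda>\<omega>. \<Sum>c\<in>UNIV. R c * p c \<omega> + X c * q c \<omega>) (\<lambda>\<omega>. \<Sum>c\<in>UNIV. R c * p c \<omega> + X c * q c \<omega>) =
           (\<Sum>c\<in>UNIV. (R c)\<^sup>2 * cov M (p c) (p c) + (X c)\<^sup>2 * cov M (q c) (q c)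
                        + 2 * R c * X c * cov M (p c) (q c))"
proof -
  have cov_node: "cov M (\<lambda>\<omega>. R c * p c \<omega> + X c * q c \<omega>) (\<lambda>\<omega>. R c' * p c' \<omega> + X c' * q c' \<omega>) =
      R c * R c' * cov M (p c) (p c') + R c * X c' * cov M (p c) (q c')
      + X c * R c' * cov M (q c) (p c') + X c * X c' * cov M (q c) (q c')" for c c'
    by (rule cov_lincomb2[OF sq_p sq_q sq_p sq_q])
  show ?thesis
  proof (subst variance_sum_uncorrelated)
    fix c c' :: 'n
    assume "c \<noteq> c'"
    then show "cov M (\<lambda>\<omega>. R c * p c \<omega> + X c * q c \<omega>) (\<lambda>\<omega>. R c' * p c' \<omega> + X c' * q c' \<omega>) = 0"
      using cov_p cov_q cov_qp[of c c'] cov_qp[of c' c] by (simp add: cov_node cov_commute[of M "p c" "q c'"])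
  qed (simp_all add: cov_node cov_commute[of M "q _" "p _"] power2_eq_square square_integrable_add
      square_integrable_cmult sq_p sq_q algebra_simps)
qed

lemma quadratic_form_le_max_square:
  fixes R X A B u v w :: real
  assumes "0 \<le> R" "R \<le> A" "0 \<le> X" "X \<le> B" "0 \<le> u" "0 \<le> v" "0 \<le> w"
  shows "R\<^sup>2 * u + X\<^sup>2 * v + 2 * R * X * w \<le> max (A\<^sup>2) (B\<^sup>2) * (u + v + 2 * w)"
proof -
  let ?m = "max (A\<^sup>2) (B\<^sup>2)"
  have "R\<^sup>2 \<le> ?m"
    using power_mono[of R A 2] assms by (simp add: le_max_iff_disj)
  moreover have "X\<^sup>2 \<le> ?m"
    using power_mono[of X B 2] assms by (simp add: le_max_iff_disj)
  moreover have "R * X \<le> ?m"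
  proof -
    have "R * X \<le> A * B"
      using assms by (intro mult_mono) auto
    also have "\<dots> \<le> ?m"
      using assms by (cases "A \<le> B") (auto simp: power2_eq_square le_max_iff_disj intro: mult_mono)
    finally show ?thesis .
  qed
  ultimately show ?thesis
    using mult_right_mono[of "R\<^sup>2" ?m u] mult_right_mono[of "X\<^sup>2" ?m v] mult_right_mono[of "R * X" ?m w] assms
    by (simp add: algebra_simps)
qed

lemma jointly_centered_gaussian_measurable:
  assumes "jointly_centered_gaussian M p q"
  shows "p c \<in> borel_measurable M" and "q c \<in> borel_measurable M"
proof -
  have "centered_gaussian M (\<lambda>\<omega>. \<Sum>c'\<in>UNIV. (if c' = c then \<alpha> else 0) * p c' \<omega> + (if c' = c then \<beta> else 0) * q c' \<omega>)"
    for \<alpha> \<beta>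
    using assms[unfolded jointly_centered_gaussian_def, rule_format,
        of "\<lambda>c'. if c' = c then \<alpha> else 0" "\<lambda>c'. if c' = c then \<beta> else 0"] .
  then have "centered_gaussian M (\<lambda>\<omega>. \<alpha> * p c \<omega> + \<beta> * q c \<omega>)" for \<alpha> \<beta>
    by (simp add: if_distrib[where f = "\<lambda>y. y * z" for z] sum.distrib cong: if_cong)
  from this[of 1 0] this[of 0 1] show "p c \<in> borel_measurable M" "q c \<in> borel_measurable M"
    by (simp_all add: centered_gaussian_def)
qed

lemma sum_quadratic_forms_le:
  fixes R X u v w :: "'n::finite \<Rightarrow> real"
  assumes R: "\<And>c. 0 \<le> R c \<and> R c \<le> d * A" and X: "\<And>c. 0 \<le> X c \<and> X c \<le> d * B"
    and u: "\<And>c. 0 \<le> u c" and v: "\<And>c. 0 \<le> v c" and w: "\<And>c. 0 \<le> w c"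
    and N: "CARD('n) \<le> N"
  shows "(\<Sum>c\<in>UNIV. (R c)\<^sup>2 * u c + (X c)\<^sup>2 * v c + 2 * R c * X c * w c)
           \<le> d\<^sup>2 * real N * (max (A\<^sup>2) (B\<^sup>2) * Max (range (\<lambda>c. u c + v c + 2 * w c)))"
proof -
  let ?K = "\<lambda>c. u c + v c + 2 * w c" and ?m = "max (A\<^sup>2) (B\<^sup>2)"
  have K_le_Max: "?K c \<le> Max (range ?K)" for c
    by (rule Max_ge) simp_all
  have bound_nonneg: "0 \<le> d\<^sup>2 * ?m * Max (range ?K)"
    using order_trans[OF _ K_le_Max] u v w
    by (intro mult_nonneg_nonneg) (simp_all add: le_max_iff_disj add_nonneg_nonneg)
  have "(\<Sum>c\<in>UNIV. (R c)\<^sup>2 * u c + (X c)\<^sup>2 * v c + 2 * R c * X c * w c)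
          \<le> (\<Sum>c\<in>(UNIV :: 'n set). d\<^sup>2 * ?m * Max (range ?K))"
  proof (rule sum_mono)
    fix c
    have "(R c)\<^sup>2 * u c + (X c)\<^sup>2 * v c + 2 * R c * X c * w c \<le> max ((d * A)\<^sup>2) ((d * B)\<^sup>2) * ?K c"
      using R[of c] X[of c] u v w by (intro quadratic_form_le_max_square) auto
    also have "\<dots> = d\<^sup>2 * ?m * ?K c"
      by (simp add: power_mult_distrib max_mult_distrib_left)
    also have "\<dots> \<le> d\<^sup>2 * ?m * Max (range ?K)"
      by (intro mult_left_mono K_le_Max mult_nonneg_nonneg) (simp_all add: le_max_iff_disj)
    finally show "(R c)\<^sup>2 * u c + (X c)\<^sup>2 * v c + 2 * R c * X c * w c \<le> d\<^sup>2 * ?m * Max (range ?K)" .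
  qed
  also have "\<dots> = real CARD('n) * (d\<^sup>2 * ?m * Max (range ?K))"
    by simp
  also have "\<dots> \<le> real N * (d\<^sup>2 * ?m * Max (range ?K))"
    using N bound_nonneg by (intro mult_right_mono) simp_all
  also have "\<dots> = d\<^sup>2 * real N * (?m * Max (range ?K))"
    by (simp only: mult_ac)
  finally show ?thesis .
qed

theorem theorem11:
  fixes par :: "'n::finite \<Rightarrow> 'n option"
    and r x :: "'n \<Rightarrow> real"
    and M :: "'w measure"
    and p q :: "'n \<Rightarrow> 'w \<Rightarrow> real"
  assumes tree: "is_rooted_tree par"
    and root_deg: "root_degree_one par"
    and r_pos: "\<And>n. r n > 0"
    and x_pos: "\<And>n. x n > 0"
    and prob: "prob_space M"
    and gauss: "jointly_centered_gaussian M p q"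
    and p_sq: "\<And>c. integrable M (\<lambda>\<omega>. (p c \<omega>)\<^sup>2)"
    and q_sq: "\<And>c. integrable M (\<lambda>\<omega>. (q c \<omega>)\<^sup>2)"
    and cov_p: "\<And>a b. a \<noteq> b \<Longrightarrow> cov M (p a) (p b) = 0"
    and cov_q: "\<And>a b. a \<noteq> b \<Longrightarrow> cov M (q a) (q b) = 0"
    and cov_qp: "\<And>a b. a \<noteq> b \<Longrightarrow> cov M (q a) (p b) = 0"
    and cov_qp_diag: "\<And>a. cov M (q a) (p a) \<ge> 0"
  shows "\<forall>a. cov M (lcpf_v par r x p q a) (lcpf_v par r x p q a)
            \<le> (real (tree_depth par))\<^sup>2 * real (CARD('n option)) *
               (max ((Max (range r))\<^sup>2) ((Max (range x))\<^sup>2) *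
                Max (range (\<lambda>c. cov M (p c) (p c) + cov M (q c) (q c) + 2 * cov M (p c) (q c))))"
proof -
  interpret prob_space M
    by (rule prob)
  have sq: "square_integrable M (p c)" "square_integrable M (q c)" for c
    using jointly_centered_gaussian_measurable[OF gauss] p_sq q_sq by (simp_all add: square_integrable_def)
  define R where "R a c = (\<Sum>n\<in>path_to_root par a \<inter> path_to_root par c. r n)" for a c
  define X where "X a c = (\<Sum>n\<in>path_to_root par a \<inter> path_to_root par c. x n)" for a c
  have variance: "cov M (lcpf_v par r x p q a) (lcpf_v par r x p q a) =
      (\<Sum>c\<in>UNIV. (R a c)\<^sup>2 * cov M (p c) (p c) + (X a c)\<^sup>2 * cov M (q c) (q c)
                   + 2 * R a c * X a c * cov M (p c) (q c))" for a
    unfolding lcpf_v_eq_common_path_sums[OF tree r_pos x_pos] R_def X_def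
    using sq cov_p cov_q cov_qp by (rule variance_nodal_injections)
  show ?thesis
    unfolding variance
    using sum_common_path_le_tree_depth[OF tree] r_pos x_pos cov_qp_diag
    by (intro allI sum_quadratic_forms_le cov_self_nonneg)
      (simp_all add: R_def X_def less_imp_le sum_nonneg cov_commute[of M "p _" "q _"])
qed

end
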